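(* Let $\mathcal{M}=(E,\rho)$ be a $q$-matroid and $V\le E$. (a) $\dim V-\rho(V)=\dim\mathrm{cyc}(V)-\rho(\mathrm{cyc}(V))$. (b) If $V=\mathrm{cyc}(V)\oplus W$, then $\rho(V)=\rho(\mathrm{cyc}(V))+\dim W$ and $\dim W=\rho(W)$, i.e. $W$ is independent.
   Context: Let $\mathbb{F}=\mathbb{F}_q$. A $q$-matroid is $\mathcal{M}=(E,\rho)$, $E$ a finite-dimensional $\mathbb{F}$-vector space, $\rho$ from subspaces to $\mathbb{Z}_{\ge0}$ with $0\le\rho(V)\le\dim V$, monotone and submodular. Independent: $\rho(V)=\dim V$. Cyclic core: $\mathrm{cyc}(V)=\{x\in V\mid\rho(W)=\rho(V)\text{ for all }W\le V\text{ with }W+\langle x\rangle=V\}$ (a subspace of $V$). *)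

theory Defs
  imports "HOL-Analysis.Analysis"
begin

text \<open>The ambient space E is modelled as the full space F^n = 'a^'n over a finite field 'a
  (every finite-dimensional F_q-space is isomorphic to one of these). Subspaces are
  vec.subspace, dimension is vec.dim, the sum of subspaces V+W is vec.span (V \<union> W).\<close>

definition q_matroid :: "((('a::{finite,field})^'n) set \<Rightarrow> nat) \<Rightarrow> bool" where
  "q_matroid \<rho> \<longleftrightarrow>
     (\<forall>V. vec.subspace V \<longrightarrow> \<rho> V \<le> vec.dim V) \<and>
     (\<forall>V W. vec.subspace V \<and> vec.subspace W \<and> V \<subseteq> W \<longrightarrow> \<rho> V \<le> \<rho> W) \<and>
     (\<forall>V W. vec.subspace V \<and> vec.subspace W \<longrightarrow>
        \<rho> (vec.span (V \<union> W)) + \<rho> (V \<inter> W) \<le> \<rho> V + \<rho> W)"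

definition q_independent :: "((('a::{finite,field})^'n) set \<Rightarrow> nat) \<Rightarrow> ('a^'n) set \<Rightarrow> bool" where
  "q_independent \<rho> V \<longleftrightarrow> \<rho> V = vec.dim V"

definition cyc :: "((('a::{finite,field})^'n) set \<Rightarrow> nat) \<Rightarrow> ('a^'n) set \<Rightarrow> ('a^'n) set" where
  "cyc \<rho> V = {x \<in> V. \<forall>W. vec.subspace W \<and> W \<subseteq> V \<and> vec.span (W \<union> vec.span {x}) = V
                          \<longrightarrow> \<rho> W = \<rho> V}"

end

theory Submission
  imports Defs
begin

text \<open>Call \<open>dim V - \<rho> V\<close> the nullity of \<open>V\<close>. It is monotone, since adding one vector raises the
  rank by at most one. By submodularity and Grassmann's formula, the subspaces of \<open>V\<close> having the
  same nullity as \<open>V\<close> are closed under intersection. Now \<open>cyc(V)\<close> is the intersection of \<open>V\<close> with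
  the hyperplanes \<open>H\<close> of \<open>V\<close> with \<open>\<rho> H < \<rho> V\<close>, and each of these has the nullity of \<open>V\<close>; this
  gives (a). For (b), submodularity gives \<open>\<rho> V \<le> \<rho> (cyc V) + \<rho> W \<le> \<rho> (cyc V) + dim W\<close>, and (a)
  together with \<open>dim V = dim (cyc V) + dim W\<close> turns both inequalities into equalities.\<close>

definition q_nullity :: "((('a::{finite,field})^'n) set \<Rightarrow> nat) \<Rightarrow> ('a^'n) set \<Rightarrow> int" where
  "q_nullity \<rho> V = int (vec.dim V) - int (\<rho> V)"

definition rank_dropping_hyperplanes ::
    "((('a::{finite,field})^'n) set \<Rightarrow> nat) \<Rightarrow> ('a^'n) set \<Rightarrow> ('a^'n) set set" where
  "rank_dropping_hyperplanes \<rho> V =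
     {H. vec.subspace H \<and> H \<subseteq> V \<and> vec.dim H + 1 = vec.dim V \<and> \<rho> H < \<rho> V}"

lemma dim_span_Un_plus_dim_Int:
  assumes "vec.subspace S" "vec.subspace T"
  shows "vec.dim (vec.span (S \<union> T)) + vec.dim (S \<inter> T) = vec.dim S + vec.dim T"
proof -
  have "vec.span (S \<union> T) = {x + y |x y. x \<in> S \<and> y \<in> T}"
    using assms by (simp add: vec.span_Un del: vec.span_eq_iff) (simp add: vec.span_eq_iff[THEN iffD2])
  then show ?thesis
    using vec.dim_sums_Int[OF assms] by simp
qed

lemma span_Un_span_singleton: "vec.span (U \<union> vec.span {x}) = vec.span (insert x U)"
proof -
  have "vec.span (U \<union> vec.span {x}) = vec.span (U \<union> {x})"
    by (simp only: vec.span_Un vec.span_span)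
  then show ?thesis by simp
qed

lemma dim_span_insert_subspace:
  assumes "vec.subspace H" "x \<notin> H"
  shows "vec.dim (vec.span (insert x H)) = vec.dim H + 1"
  using assms by (simp add: vec.dim_insert vec.span_eq_iff[THEN iffD2])

lemma span_Un_span_singleton_eq_iff:
  assumes "vec.subspace W" "vec.subspace V" "W \<subseteq> V" "x \<in> V"
  shows "vec.span (W \<union> vec.span {x}) = V \<longleftrightarrow> W = V \<or> x \<notin> W \<and> vec.dim W + 1 = vec.dim V"
proof (cases "x \<in> W")
  case True
  then have "vec.span (W \<union> vec.span {x}) = W"
    using assms(1) by (simp add: span_Un_span_singleton insert_absorb vec.span_eq_iff[THEN iffD2])
  with True show ?thesis
    by simp
next
  case False
  have "vec.span (insert x W) \<subseteq> V"
    using assms by (simp add: vec.span_minimal)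
  moreover have "vec.dim (vec.span (insert x W)) = vec.dim W + 1"
    using dim_span_insert_subspace[OF assms(1) False] .
  ultimately have "vec.span (insert x W) = V \<longleftrightarrow> vec.dim W + 1 = vec.dim V"
    using vec.subspace_dim_equal[OF vec.subspace_span assms(2)] by fastforce
  moreover have "W \<noteq> V"
    using False assms(4) by blast
  ultimately show ?thesis
    using False by (simp add: span_Un_span_singleton)
qed

lemma q_matroid_rank_le_dim: "q_matroid \<rho> \<Longrightarrow> vec.subspace V \<Longrightarrow> \<rho> V \<le> vec.dim V"
  unfolding q_matroid_def by blast

lemma q_matroid_rank_mono:
  "q_matroid \<rho> \<Longrightarrow> vec.subspace V \<Longrightarrow> vec.subspace W \<Longrightarrow> V \<subseteq> W \<Longrightarrow> \<rho> V \<le> \<rho> W"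
  unfolding q_matroid_def by blast

lemma q_matroid_submodular:
  "q_matroid \<rho> \<Longrightarrow> vec.subspace V \<Longrightarrow> vec.subspace W \<Longrightarrow>
     \<rho> (vec.span (V \<union> W)) + \<rho> (V \<inter> W) \<le> \<rho> V + \<rho> W"
  unfolding q_matroid_def by blast

lemma q_matroid_rank_span_insert_le:
  assumes "q_matroid \<rho>" "vec.subspace U"
  shows "\<rho> (vec.span (insert x U)) \<le> \<rho> U + 1"
proof -
  have "\<rho> (vec.span (U \<union> vec.span {x})) \<le> \<rho> U + \<rho> (vec.span {x})"
    using q_matroid_submodular[OF assms vec.subspace_span, of "{x}"] by linarith
  moreover have "\<rho> (vec.span {x}) \<le> 1"
    using q_matroid_rank_le_dim[OF assms(1) vec.subspace_span, of "{x}"] by (simp split: if_splits)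
  ultimately show ?thesis
    by (simp add: span_Un_span_singleton)
qed

lemma q_nullity_mono:
  assumes "q_matroid \<rho>" "vec.subspace U" "vec.subspace V" "U \<subseteq> V"
  shows "q_nullity \<rho> U \<le> q_nullity \<rho> V"
  using assms(2,4)
proof (induction "vec.dim V - vec.dim U" arbitrary: U rule: less_induct)
  case less
  show ?case
  proof (cases "U = V")
    case True
    then show ?thesis by simp
  next
    case False
    then obtain x where x: "x \<in> V" "x \<notin> U"
      using less.prems by blast
    define U' where "U' = vec.span (insert x U)"
    have "U' \<subseteq> V"
      unfolding U'_def using assms(3) less.prems x by (simp add: vec.span_minimal)
    moreover have dim_U': "vec.dim U' = vec.dim U + 1"
      unfolding U'_def using dim_span_insert_subspace[OF less.prems(1) x(2)] .
    ultimately have "vec.dim V - vec.dim U' < vec.dim V - vec.dim U"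
      using vec.dim_subset[of U' V] by linarith
    then have "q_nullity \<rho> U' \<le> q_nullity \<rho> V"
      using less.hyps \<open>U' \<subseteq> V\<close> unfolding U'_def by (blast intro: vec.subspace_span)
    moreover have "\<rho> U' \<le> \<rho> U + 1"
      unfolding U'_def using q_matroid_rank_span_insert_le[OF assms(1) less.prems(1)] .
    ultimately show ?thesis
      using dim_U' unfolding q_nullity_def by linarith
  qed
qed

lemma q_nullity_Int_eq:
  assumes "q_matroid \<rho>" "vec.subspace V" "vec.subspace A" "vec.subspace B" "A \<subseteq> V" "B \<subseteq> V"
    and "q_nullity \<rho> A = q_nullity \<rho> V" "q_nullity \<rho> B = q_nullity \<rho> V"
  shows "q_nullity \<rho> (A \<inter> B) = q_nullity \<rho> V"
proof -
  have "\<rho> (vec.span (A \<union> B)) + \<rho> (A \<inter> B) \<le> \<rho> A + \<rho> B"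
    using q_matroid_submodular[OF assms(1,3,4)] .
  moreover have "vec.dim (vec.span (A \<union> B)) + vec.dim (A \<inter> B) = vec.dim A + vec.dim B"
    using dim_span_Un_plus_dim_Int[OF assms(3,4)] .
  moreover have "q_nullity \<rho> (vec.span (A \<union> B)) \<le> q_nullity \<rho> V"
    using assms by (simp add: q_nullity_mono vec.span_minimal)
  moreover have "q_nullity \<rho> (A \<inter> B) \<le> q_nullity \<rho> V"
    using assms by (auto intro: q_nullity_mono vec.subspace_inter)
  ultimately show ?thesis
    using assms(7,8) unfolding q_nullity_def by linarith
qed

lemma q_nullity_Inter_eq:
  assumes "q_matroid \<rho>" "vec.subspace V" "finite T"
    and "\<And>H. H \<in> T \<Longrightarrow> vec.subspace H \<and> H \<subseteq> V \<and> q_nullity \<rho> H = q_nullity \<rho> V"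
  shows "q_nullity \<rho> (V \<inter> \<Inter>T) = q_nullity \<rho> V"
  using assms(3,4)
proof (induction T rule: finite_induct)
  case empty
  then show ?case by simp
next
  case (insert H T)
  have "vec.subspace (V \<inter> \<Inter>T)"
    using assms(2) insert.prems by (auto intro!: vec.subspace_inter vec.subspace_Inter)
  moreover have "V \<inter> \<Inter>(insert H T) = (V \<inter> \<Inter>T) \<inter> H"
    by blast
  ultimately show ?case
    using q_nullity_Int_eq[OF assms(1,2)] insert by auto
qed

lemma rank_dropping_hyperplane_nullity:
  assumes "q_matroid \<rho>" "vec.subspace V" "H \<in> rank_dropping_hyperplanes \<rho> V"
  shows "q_nullity \<rho> H = q_nullity \<rho> V"
proof -
  have "vec.subspace H" "H \<subseteq> V" "vec.dim H + 1 = vec.dim V" "\<rho> H < \<rho> V"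
    using assms(3) unfolding rank_dropping_hyperplanes_def by auto
  then show ?thesis
    using q_nullity_mono[OF assms(1) _ assms(2)] unfolding q_nullity_def by fastforce
qed

lemma cyc_eq_Inter_rank_dropping_hyperplanes:
  assumes "q_matroid \<rho>" "vec.subspace V"
  shows "cyc \<rho> V = V \<inter> \<Inter>(rank_dropping_hyperplanes \<rho> V)"
proof (intro equalityI subsetI)
  fix x
  assume x: "x \<in> cyc \<rho> V"
  have "x \<in> H" if H: "H \<in> rank_dropping_hyperplanes \<rho> V" for H
  proof (rule ccontr)
    assume "x \<notin> H"
    with H x have "vec.span (H \<union> vec.span {x}) = V"
      using span_Un_span_singleton_eq_iff[OF _ assms(2)]
      unfolding rank_dropping_hyperplanes_def cyc_def by blast
    with H x show False
      unfolding rank_dropping_hyperplanes_def cyc_def by auto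
  qed
  with x show "x \<in> V \<inter> \<Inter>(rank_dropping_hyperplanes \<rho> V)"
    unfolding cyc_def by blast
next
  fix x
  assume x: "x \<in> V \<inter> \<Inter>(rank_dropping_hyperplanes \<rho> V)"
  have "\<rho> W = \<rho> V"
    if W: "vec.subspace W" "W \<subseteq> V" "vec.span (W \<union> vec.span {x}) = V" for W
  proof (cases "W = V")
    case False
    with W x have "x \<notin> W" "vec.dim W + 1 = vec.dim V"
      using span_Un_span_singleton_eq_iff[OF W(1) assms(2) W(2)] by auto
    with W x have "\<not> \<rho> W < \<rho> V"
      unfolding rank_dropping_hyperplanes_def by blast
    then show ?thesis
      using q_matroid_rank_mono[OF assms(1) W(1) assms(2) W(2)] by simp
  qed simp
  with x show "x \<in> cyc \<rho> V"
    unfolding cyc_def by blast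
qed

lemma subspace_cyc:
  assumes "q_matroid \<rho>" "vec.subspace V"
  shows "vec.subspace (cyc \<rho> V)"
  unfolding cyc_eq_Inter_rank_dropping_hyperplanes[OF assms] rank_dropping_hyperplanes_def
  using assms(2) by (auto intro!: vec.subspace_inter vec.subspace_Inter)

lemma q_nullity_cyc:
  assumes "q_matroid \<rho>" "vec.subspace V"
  shows "q_nullity \<rho> (cyc \<rho> V) = q_nullity \<rho> V"
  unfolding cyc_eq_Inter_rank_dropping_hyperplanes[OF assms]
proof (rule q_nullity_Inter_eq[OF assms])
  show "finite (rank_dropping_hyperplanes \<rho> V)"
    by simp
  show "vec.subspace H \<and> H \<subseteq> V \<and> q_nullity \<rho> H = q_nullity \<rho> V"
    if "H \<in> rank_dropping_hyperplanes \<rho> V" for H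
    using that rank_dropping_hyperplane_nullity[OF assms that]
    unfolding rank_dropping_hyperplanes_def by blast
qed

lemma q_matroid_complement_of_equal_nullity:
  assumes "q_matroid \<rho>" "vec.subspace C" "vec.subspace W" "C \<inter> W = {0}"
    and "q_nullity \<rho> C = q_nullity \<rho> (vec.span (C \<union> W))"
  shows "\<rho> (vec.span (C \<union> W)) = \<rho> C + vec.dim W \<and> \<rho> W = vec.dim W"
proof -
  have "vec.dim (vec.span (C \<union> W)) = vec.dim C + vec.dim W"
    using dim_span_Un_plus_dim_Int[OF assms(2,3)] assms(4) by simp
  moreover have "\<rho> (vec.span (C \<union> W)) \<le> \<rho> C + \<rho> W"
    using q_matroid_submodular[OF assms(1-3)] by simp
  moreover have "\<rho> W \<le> vec.dim W"
    using q_matroid_rank_le_dim[OF assms(1,3)] .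
  ultimately show ?thesis
    using assms(5) unfolding q_nullity_def by linarith
qed

theorem proposition3p10:
  fixes \<rho> :: "(('a::{finite,field})^'n) set \<Rightarrow> nat" and V :: "('a^'n) set"
  assumes "q_matroid \<rho>" and "vec.subspace V"
  shows "int (vec.dim V) - int (\<rho> V) = int (vec.dim (cyc \<rho> V)) - int (\<rho> (cyc \<rho> V)) \<and>
    (\<forall>W. vec.subspace W \<and> cyc \<rho> V \<inter> W = {0} \<and> vec.span (cyc \<rho> V \<union> W) = V \<longrightarrow>
           \<rho> V = \<rho> (cyc \<rho> V) + vec.dim W \<and> vec.dim W = \<rho> W \<and> q_independent \<rho> W)"
proof -
  have nullity: "q_nullity \<rho> (cyc \<rho> V) = q_nullity \<rho> V"
    using q_nullity_cyc[OF assms] .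
  have "\<rho> V = \<rho> (cyc \<rho> V) + vec.dim W \<and> \<rho> W = vec.dim W"
    if "vec.subspace W" "cyc \<rho> V \<inter> W = {0}" "vec.span (cyc \<rho> V \<union> W) = V" for W
    using q_matroid_complement_of_equal_nullity[OF assms(1) subspace_cyc[OF assms] that(1,2)]
      nullity that(3) by simp
  with nullity show ?thesis
    unfolding q_nullity_def q_independent_def by auto
qed

end
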